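(* Let $R=\bigoplus_{n\ge0}R_n$ be a standard graded Noetherian ring whose base ring $(R_0,\mathfrak m_0)$ is an Artinian local ring with infinite residue field. Let $M$ be a finitely generated graded $R$-module minimally generated by homogeneous elements of degrees $d_1\ge\cdots\ge d_s$. Then for any finite set $\mathcal P=\{\mathfrak p_1,\dots,\mathfrak p_n\}$ of homogeneous prime ideals of $R$ there exists a homogeneous element $x\in M$ of degree $d_1$ such that for all $1\le i\le n$, $$\mu\big((M/Rx)_{\mathfrak p_i}\big)=\max\{0,\ \mu(M_{\mathfrak p_i})-1\}.$$
   Context: Standard graded means $R=R_0[R_1]$, i.e. $R$ is generated as an $R_0$-algebra by finitely many elements of degree $1$. $\mu(N)$ denotes the minimal number of generators of a module $N$ over the local ring $R_{\mathfrak p}$. *)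

theory Defs
  imports Main "HOL.Modules"
begin

definition decomp_ok :: "('i \<Rightarrow> 'a::ab_group_add set) \<Rightarrow> ('i \<Rightarrow> 'a) \<Rightarrow> 'a \<Rightarrow> bool" where
  "decomp_ok G f r \<longleftrightarrow> finite {i. f i \<noteq> 0} \<and> (\<forall>i. f i \<in> G i) \<and> r = sum f {i. f i \<noteq> 0}"

definition internal_dsum :: "('i \<Rightarrow> 'a::ab_group_add set) \<Rightarrow> bool" where
  "internal_dsum G \<longleftrightarrow>
     (\<forall>i. 0 \<in> G i \<and> (\<forall>a\<in>G i. \<forall>b\<in>G i. a + b \<in> G i \<and> - a \<in> G i)) \<and>
     (\<forall>r. \<exists>f. decomp_ok G f r) \<and>
     (\<forall>r f f'. decomp_ok G f r \<and> decomp_ok G f' r \<longrightarrow> f = f')"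

definition hcomp :: "('i \<Rightarrow> 'a::ab_group_add set) \<Rightarrow> 'i \<Rightarrow> 'a \<Rightarrow> 'a" where
  "hcomp G i r = (THE f. decomp_ok G f r) i"

definition graded_ring :: "(nat \<Rightarrow> 'r::comm_ring_1 set) \<Rightarrow> bool" where
  "graded_ring Rg \<longleftrightarrow> internal_dsum Rg \<and> 1 \<in> Rg 0 \<and>
     (\<forall>i j. \<forall>a\<in>Rg i. \<forall>b\<in>Rg j. a * b \<in> Rg (i + j))"

definition graded_module ::
  "('r::comm_ring_1 \<Rightarrow> 'm::ab_group_add \<Rightarrow> 'm) \<Rightarrow> (nat \<Rightarrow> 'r set) \<Rightarrow> (int \<Rightarrow> 'm set) \<Rightarrow> bool" where
  "graded_module sc Rg Mg \<longleftrightarrow> module sc \<and> internal_dsum Mg \<and>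
     (\<forall>i j. \<forall>a\<in>Rg i. \<forall>x\<in>Mg j. sc a x \<in> Mg (int i + j))"

inductive_set ring_gen :: "'r::comm_ring_1 set \<Rightarrow> 'r set" for S where
  gen: "a \<in> S \<Longrightarrow> a \<in> ring_gen S"
| zero: "0 \<in> ring_gen S"
| one: "1 \<in> ring_gen S"
| add: "a \<in> ring_gen S \<Longrightarrow> b \<in> ring_gen S \<Longrightarrow> a + b \<in> ring_gen S"
| neg: "a \<in> ring_gen S \<Longrightarrow> - a \<in> ring_gen S"
| mult: "a \<in> ring_gen S \<Longrightarrow> b \<in> ring_gen S \<Longrightarrow> a * b \<in> ring_gen S"

definition standard_graded :: "(nat \<Rightarrow> 'r::comm_ring_1 set) \<Rightarrow> bool" where
  "standard_graded Rg \<longleftrightarrow> (\<exists>G. finite G \<and> G \<subseteq> Rg 1 \<and> ring_gen (Rg 0 \<union> G) = UNIV)"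

definition is_ideal :: "'r::comm_ring_1 set \<Rightarrow> bool" where
  "is_ideal I \<longleftrightarrow> 0 \<in> I \<and> (\<forall>a\<in>I. \<forall>b\<in>I. a + b \<in> I) \<and> (\<forall>r. \<forall>a\<in>I. r * a \<in> I)"

definition noetherian_ring :: "'r::comm_ring_1 itself \<Rightarrow> bool" where
  "noetherian_ring _ \<longleftrightarrow> (\<forall>I::'r set. is_ideal I \<longrightarrow>
     (\<exists>F. finite F \<and> F \<subseteq> I \<and> I = {\<Sum>f\<in>F. c f * f | c. True}))"

definition ideal_in :: "'r::comm_ring_1 set \<Rightarrow> 'r set \<Rightarrow> bool" where
  "ideal_in A J \<longleftrightarrow> J \<subseteq> A \<and> 0 \<in> J \<and> (\<forall>a\<in>J. \<forall>b\<in>J. a + b \<in> J) \<and> (\<forall>r\<in>A. \<forall>a\<in>J. r * a \<in> J)"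

definition artinian_subring :: "'r::comm_ring_1 set \<Rightarrow> bool" where
  "artinian_subring A \<longleftrightarrow> (\<forall>f :: nat \<Rightarrow> 'r set.
     (\<forall>n. ideal_in A (f n) \<and> f (Suc n) \<subseteq> f n) \<longrightarrow> (\<exists>N. \<forall>n\<ge>N. f n = f N))"

definition local_with_max :: "'r::comm_ring_1 set \<Rightarrow> 'r set \<Rightarrow> bool" where
  "local_with_max A m0 \<longleftrightarrow> ideal_in A m0 \<and> 1 \<notin> m0 \<and>
     (\<forall>J. ideal_in A J \<and> 1 \<notin> J \<longrightarrow> J \<subseteq> m0)"

definition residue_field :: "'r::comm_ring_1 set \<Rightarrow> 'r set \<Rightarrow> 'r set set" where
  "residue_field A m0 = (\<lambda>a. {b \<in> A. a - b \<in> m0}) ` A"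

definition prime_ideal :: "'r::comm_ring_1 set \<Rightarrow> bool" where
  "prime_ideal P \<longleftrightarrow> is_ideal P \<and> 1 \<notin> P \<and> (\<forall>a b. a * b \<in> P \<longrightarrow> a \<in> P \<or> b \<in> P)"

definition homogeneous_ideal :: "(nat \<Rightarrow> 'r::comm_ring_1 set) \<Rightarrow> 'r set \<Rightarrow> bool" where
  "homogeneous_ideal Rg P \<longleftrightarrow> (\<forall>a\<in>P. \<forall>n. hcomp Rg n a \<in> P)"

text \<open>Fractions m/s with s not in p; m/s = m'/s' iff u(s'm - sm') in N for some u not in p.
  With N = {0} this is M_p; with sc = (*) and N = {0} it is the ring R_p.\<close>
definition loc_cls :: "('r::comm_ring_1 \<Rightarrow> 'm::ab_group_add \<Rightarrow> 'm) \<Rightarrow> 'm set \<Rightarrow> 'r set \<Rightarrow> 'm \<Rightarrow> 'r \<Rightarrow> ('m \<times> 'r) set" where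
  "loc_cls sc N p m s = {(m', s'). s' \<notin> p \<and> (\<exists>u. u \<notin> p \<and> sc u (sc s' m - sc s m') \<in> N)}"

definition loc_set :: "('r::comm_ring_1 \<Rightarrow> 'm::ab_group_add \<Rightarrow> 'm) \<Rightarrow> 'm set \<Rightarrow> 'r set \<Rightarrow> ('m \<times> 'r) set set" where
  "loc_set sc N p = {loc_cls sc N p m s | m s. s \<notin> p}"

definition loc_rep :: "'a set \<Rightarrow> 'a" where
  "loc_rep c = (SOME x. x \<in> c)"

definition loc_add :: "('r::comm_ring_1 \<Rightarrow> 'm::ab_group_add \<Rightarrow> 'm) \<Rightarrow> 'm set \<Rightarrow> 'r set \<Rightarrow>
    ('m \<times> 'r) set \<Rightarrow> ('m \<times> 'r) set \<Rightarrow> ('m \<times> 'r) set" where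
  "loc_add sc N p c c' = (case loc_rep c of (m, s) \<Rightarrow> case loc_rep c' of (m', s') \<Rightarrow>
      loc_cls sc N p (sc s' m + sc s m') (s * s'))"

definition loc_smul :: "('r::comm_ring_1 \<Rightarrow> 'm::ab_group_add \<Rightarrow> 'm) \<Rightarrow> 'm set \<Rightarrow> 'r set \<Rightarrow>
    ('r \<times> 'r) set \<Rightarrow> ('m \<times> 'r) set \<Rightarrow> ('m \<times> 'r) set" where
  "loc_smul sc N p a c = (case loc_rep a of (r, t) \<Rightarrow> case loc_rep c of (m, s) \<Rightarrow>
      loc_cls sc N p (sc r m) (t * s))"

inductive_set loc_span :: "('r::comm_ring_1 \<Rightarrow> 'm::ab_group_add \<Rightarrow> 'm) \<Rightarrow> 'm set \<Rightarrow> 'r set \<Rightarrow>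
    ('m \<times> 'r) set set \<Rightarrow> ('m \<times> 'r) set set" for sc N p G where
  zero: "loc_cls sc N p 0 1 \<in> loc_span sc N p G"
| gen: "c \<in> G \<Longrightarrow> c \<in> loc_span sc N p G"
| add: "c \<in> loc_span sc N p G \<Longrightarrow> c' \<in> loc_span sc N p G \<Longrightarrow> loc_add sc N p c c' \<in> loc_span sc N p G"
| smul: "a \<in> loc_set (*) {0} p \<Longrightarrow> c \<in> loc_span sc N p G \<Longrightarrow> loc_smul sc N p a c \<in> loc_span sc N p G"

definition mu_loc :: "('r::comm_ring_1 \<Rightarrow> 'm::ab_group_add \<Rightarrow> 'm) \<Rightarrow> 'm set \<Rightarrow> 'r set \<Rightarrow> nat" where
  "mu_loc sc N p = (LEAST k. \<exists>G. G \<subseteq> loc_set sc N p \<and> finite G \<and> card G = k \<and>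
      loc_span sc N p G = loc_set sc N p)"

end

theory Submission
  imports Defs
begin

text \<open>The fibre \<open>M\<^sub>p/pM\<^sub>p\<close> controls \<open>\<mu>(M\<^sub>p)\<close>: if \<open>x\<close> has nonzero image in it, a minimal
  generating set of \<open>M\<^sub>p\<close> can be exchanged to contain \<open>x\<close>, so \<open>\<mu>((M/Rx)\<^sub>p) = \<mu>(M\<^sub>p) - 1\<close>.
  It therefore suffices to find a homogeneous \<open>x\<close> of top degree \<open>d\<^sub>1\<close> (index \<open>0\<close> below)
  surviving in the fibre at every \<open>p\<close> with \<open>M\<^sub>p \<noteq> 0\<close>. For one such \<open>p\<close> this is done by
  Nakayama: if \<open>R\<^sub>1 \<not>\<subseteq> p\<close>, some generator \<open>g\<^sub>j\<close> survives and \<open>r\<^sup>n g\<^sub>j\<close> with \<open>r \<in> R\<^sub>1 - p\<close>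
  is moved into degree \<open>d\<^sub>1\<close>; if \<open>R\<^sub>1 \<subseteq> p\<close>, then \<open>R = R\<^sub>0 + p\<close> and \<open>p \<inter> R\<^sub>0 = m\<^sub>0\<close>, and
  the minimality of the generators forces \<open>g\<^sub>1\<close> itself to survive. Finally, the degree-\<open>d\<^sub>1\<close>
  elements vanishing in a given fibre form a proper submodule of \<open>M\<^sub>d\<^sub>1\<close>, and finitely many of
  these cannot cover \<open>M\<^sub>d\<^sub>1\<close> because the residue field of \<open>R\<^sub>0\<close> is infinite.\<close>

lemma is_ideal_UNIV: "is_ideal UNIV"
  unfolding is_ideal_def by simp

lemma ideal_0: "is_ideal I \<Longrightarrow> 0 \<in> I"
  and ideal_add: "is_ideal I \<Longrightarrow> a \<in> I \<Longrightarrow> b \<in> I \<Longrightarrow> a + b \<in> I"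
  and ideal_mult_left: "is_ideal I \<Longrightarrow> a \<in> I \<Longrightarrow> r * a \<in> I"
  unfolding is_ideal_def by blast+

lemma ideal_mult_right: "is_ideal I \<Longrightarrow> a \<in> I \<Longrightarrow> a * r \<in> I"
  using ideal_mult_left[of I a r] by (simp add: mult.commute)

lemma ideal_uminus: "is_ideal I \<Longrightarrow> a \<in> I \<Longrightarrow> - a \<in> I"
  using ideal_mult_left[of I a "- 1"] by simp

lemma ideal_diff_notin: "is_ideal I \<Longrightarrow> a \<notin> I \<Longrightarrow> b \<in> I \<Longrightarrow> a - b \<notin> I"
  using ideal_add[of I "a - b" b] by auto

lemma prime_ideal_is_ideal: "prime_ideal p \<Longrightarrow> is_ideal p"
  and prime_ideal_one_notin: "prime_ideal p \<Longrightarrow> 1 \<notin> p"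
  unfolding prime_ideal_def by blast+

lemma prime_ideal_mult_notin: "prime_ideal p \<Longrightarrow> u \<notin> p \<Longrightarrow> v \<notin> p \<Longrightarrow> u * v \<notin> p"
  unfolding prime_ideal_def by blast

lemma prime_ideal_power_notin: "prime_ideal p \<Longrightarrow> u \<notin> p \<Longrightarrow> u ^ n \<notin> p"
  by (induction n) (simp_all add: prime_ideal_one_notin prime_ideal_mult_notin)

section \<open>Generators of a localized quotient\<close>

text \<open>These notions avoid fractions: \<open>loc_generates sc p N S\<close> says that the image of \<open>S\<close>
  generates \<open>(M/N)\<^sub>p\<close>, \<open>loc_trivial sc p\<close> that \<open>M\<^sub>p = 0\<close>, and \<open>fibre_vanishes sc p x\<close> that
  \<open>x\<close> maps to zero in \<open>M\<^sub>p/pM\<^sub>p\<close>.\<close>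

definition loc_generates :: "('r::comm_ring_1 \<Rightarrow> 'm::ab_group_add \<Rightarrow> 'm) \<Rightarrow> 'r set \<Rightarrow> 'm set \<Rightarrow> 'm set \<Rightarrow> bool" where
  "loc_generates sc p N S \<longleftrightarrow> (\<forall>m. \<exists>u. u \<notin> p \<and> sc u m \<in> module.span sc (S \<union> N))"

definition loc_trivial :: "('r::comm_ring_1 \<Rightarrow> 'm::ab_group_add \<Rightarrow> 'm) \<Rightarrow> 'r set \<Rightarrow> bool" where
  "loc_trivial sc p \<longleftrightarrow> (\<forall>m. \<exists>u. u \<notin> p \<and> sc u m = 0)"

definition ideal_multiples :: "('r::comm_ring_1 \<Rightarrow> 'm::ab_group_add \<Rightarrow> 'm) \<Rightarrow> 'r set \<Rightarrow> 'm set \<Rightarrow> 'm set" where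
  "ideal_multiples sc I T = {sc a t | a t. a \<in> I \<and> t \<in> T}"

definition fibre_vanishes :: "('r::comm_ring_1 \<Rightarrow> 'm::ab_group_add \<Rightarrow> 'm) \<Rightarrow> 'r set \<Rightarrow> 'm \<Rightarrow> bool" where
  "fibre_vanishes sc p x \<longleftrightarrow> (\<exists>u. u \<notin> p \<and> sc u x \<in> module.span sc (ideal_multiples sc p UNIV))"

lemma loc_rep_mem: "z \<in> c \<Longrightarrow> loc_rep c \<in> c"
  unfolding loc_rep_def by (rule someI)

lemma loc_cls_ring_self: "t \<notin> p \<Longrightarrow> 1 \<notin> p \<Longrightarrow> (r, t) \<in> loc_cls (*) {0} p r t"
  unfolding loc_cls_def by (auto intro: exI[of _ 1])

lemma loc_cls_in_loc_set: "s \<notin> p \<Longrightarrow> loc_cls sc N p m s \<in> loc_set sc N p"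
  unfolding loc_set_def by blast

lemma loc_cls_snd_notin: "(m', s') \<in> loc_cls sc N p m s \<Longrightarrow> s' \<notin> p"
  unfolding loc_cls_def by simp

locale module_at_prime = module sc for sc :: "'r::comm_ring_1 \<Rightarrow> 'm::ab_group_add \<Rightarrow> 'm" +
  fixes p :: "'r set"
  assumes prime: "prime_ideal p"
begin

lemma one_notin: "1 \<notin> p"
  using prime by (rule prime_ideal_one_notin)

lemma mult_notin: "u \<notin> p \<Longrightarrow> v \<notin> p \<Longrightarrow> u * v \<notin> p"
  using prime by (rule prime_ideal_mult_notin)

lemma loc_cls_eq:
  assumes N: "subspace N" and s: "s \<notin> p" and s': "s' \<notin> p" and u: "u \<notin> p"
    and h: "sc u (sc s' m - sc s m') \<in> N"
  shows "loc_cls sc N p m s = loc_cls sc N p m' s'"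
proof (intro set_eqI iffI)
  fix z assume "z \<in> loc_cls sc N p m s"
  then obtain x r v where z: "z = (x, r)" "r \<notin> p" "v \<notin> p" "sc v (sc r m - sc s x) \<in> N"
    unfolding loc_cls_def by auto
  have "sc (u * v * s) (sc r m' - sc s' x)
      = sc (u * s') (sc v (sc r m - sc s x)) - sc (v * r) (sc u (sc s' m - sc s m'))"
    by (simp add: scale_right_diff_distrib mult_ac)
  also have "\<dots> \<in> N" using z h N subspace_scale subspace_diff by blast
  finally show "z \<in> loc_cls sc N p m' s'"
    using z mult_notin[OF mult_notin[OF u z(3)] s] unfolding loc_cls_def by blast
next
  fix z assume "z \<in> loc_cls sc N p m' s'"
  then obtain x r v where z: "z = (x, r)" "r \<notin> p" "v \<notin> p" "sc v (sc r m' - sc s' x) \<in> N"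
    unfolding loc_cls_def by auto
  have "sc (u * v * s') (sc r m - sc s x)
      = sc (u * s) (sc v (sc r m' - sc s' x)) + sc (v * r) (sc u (sc s' m - sc s m'))"
    by (simp add: scale_right_diff_distrib mult_ac)
  also have "\<dots> \<in> N" using z h N subspace_scale subspace_add by blast
  finally show "z \<in> loc_cls sc N p m s"
    using z mult_notin[OF mult_notin[OF u z(3)] s'] unfolding loc_cls_def by blast
qed

lemma loc_cls_self: "subspace N \<Longrightarrow> s \<notin> p \<Longrightarrow> (m, s) \<in> loc_cls sc N p m s"
  unfolding loc_cls_def using one_notin subspace_0 by auto

lemma loc_set_rep:
  assumes N: "subspace N" and c: "c \<in> loc_set sc N p"
  obtains m s where "loc_rep c = (m, s)" "(m, s) \<in> c" "s \<notin> p"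
proof -
  obtain m1 s1 where c0: "c = loc_cls sc N p m1 s1" "s1 \<notin> p" using c unfolding loc_set_def by blast
  obtain m s where ms: "loc_rep c = (m, s)" by fastforce
  moreover have "loc_rep c \<in> c" unfolding c0 using loc_rep_mem[OF loc_cls_self[OF N c0(2)]] .
  ultimately show thesis using that[of m s] unfolding c0 by (auto dest: loc_cls_snd_notin)
qed

lemma loc_cls_rep:
  assumes N: "subspace N" and s: "s \<notin> p"
  obtains m' s' u where "loc_rep (loc_cls sc N p m s) = (m', s')" "s' \<notin> p" "u \<notin> p"
    "sc u (sc s' m - sc s m') \<in> N"
proof -
  obtain m' s' where ms: "loc_rep (loc_cls sc N p m s) = (m', s')" by fastforce
  moreover have "loc_rep (loc_cls sc N p m s) \<in> loc_cls sc N p m s"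
    using loc_rep_mem[OF loc_cls_self[OF N s]] .
  ultimately show thesis using that unfolding loc_cls_def by auto
qed

lemma loc_add_cls:
  assumes N: "subspace N" and s: "s \<notin> p" and t: "t \<notin> p"
  shows "loc_add sc N p (loc_cls sc N p a s) (loc_cls sc N p b t)
       = loc_cls sc N p (sc t a + sc s b) (s * t)"
proof -
  obtain a' s' u where e1: "loc_rep (loc_cls sc N p a s) = (a', s')" "s' \<notin> p" "u \<notin> p"
     "sc u (sc s' a - sc s a') \<in> N" by (rule loc_cls_rep[OF N s])
  obtain b' t' v where e2: "loc_rep (loc_cls sc N p b t) = (b', t')" "t' \<notin> p" "v \<notin> p"
     "sc v (sc t' b - sc t b') \<in> N" by (rule loc_cls_rep[OF N t])
  have "sc (u * v) (sc (s * t) (sc t' a' + sc s' b') - sc (s' * t') (sc t a + sc s b))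
     = - (sc (t * t' * v) (sc u (sc s' a - sc s a')) + sc (s * s' * u) (sc v (sc t' b - sc t b')))"
    by (simp only: scale_right_distrib scale_right_diff_distrib scale_scale minus_add_distrib)
       (simp add: mult_ac algebra_simps)
  also have "\<dots> \<in> N" using e1 e2 N subspace_scale subspace_add subspace_neg by blast
  finally show ?thesis unfolding loc_add_def e1(1) e2(1)
    using loc_cls_eq[OF N mult_notin[OF e1(2) e2(2)] mult_notin[OF s t] mult_notin[OF e1(3) e2(3)]]
    by simp
qed

lemma loc_smul_cls:
  assumes N: "subspace N" and s: "s \<notin> p" and t: "t \<notin> p"
  shows "loc_smul sc N p (loc_cls (*) {0} p r t) (loc_cls sc N p m s) = loc_cls sc N p (sc r m) (t * s)"
proof -
  obtain r' t' where rep: "loc_rep (loc_cls (*) {0} p r t) = (r', t')" by fastforce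
  moreover have "loc_rep (loc_cls (*) {0} p r t) \<in> loc_cls (*) {0} p r t"
    using loc_rep_mem[OF loc_cls_ring_self[OF t one_notin]] .
  ultimately obtain u where e1: "loc_rep (loc_cls (*) {0} p r t) = (r', t')" "t' \<notin> p" "u \<notin> p"
     "u * (t' * r - t * r') = 0" unfolding loc_cls_def by auto
  obtain m' s' v where e2: "loc_rep (loc_cls sc N p m s) = (m', s')" "s' \<notin> p" "v \<notin> p"
     "sc v (sc s' m - sc s m') \<in> N" by (rule loc_cls_rep[OF N s])
  have ur: "u * t * r' = u * t' * r" using e1(4) by (simp add: algebra_simps)
  have "sc (u * v) (sc (t * s) (sc r' m') - sc (t' * s') (sc r m))
      = sc (v * s) (sc (u * t * r') m') - sc (u * v * t' * s' * r) m"
    by (simp add: scale_right_diff_distrib mult_ac)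
  also have "\<dots> = - sc (u * t' * r) (sc v (sc s' m - sc s m'))"
    unfolding ur by (simp add: scale_right_diff_distrib mult_ac)
  also have "\<dots> \<in> N" using e2 N subspace_scale subspace_neg by blast
  finally show ?thesis unfolding loc_smul_def e1(1) e2(1)
    using loc_cls_eq[OF N mult_notin[OF e1(2) e2(2)] mult_notin[OF t s] mult_notin[OF e1(3) e2(3)]]
    by simp
qed

lemma loc_set_ring_rep:
  assumes "a \<in> loc_set (*) {0} p"
  obtains r t where "loc_rep a = (r, t)" "t \<notin> p"
proof -
  obtain r0 t0 where a: "a = loc_cls (*) {0} p r0 t0" "t0 \<notin> p" using assms unfolding loc_set_def by blast
  obtain r t where rt: "loc_rep a = (r, t)" by fastforce
  moreover have "loc_rep a \<in> a" unfolding a using loc_rep_mem[OF loc_cls_ring_self[OF a(2) one_notin]] .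
  ultimately show thesis using that[of r t] unfolding a by (auto dest: loc_cls_snd_notin)
qed

lemma loc_add_in_loc_set:
  assumes N: "subspace N" and "c \<in> loc_set sc N p" and "c' \<in> loc_set sc N p"
  shows "loc_add sc N p c c' \<in> loc_set sc N p"
proof -
  obtain m s m' s' where "loc_rep c = (m, s)" "s \<notin> p" "loc_rep c' = (m', s')" "s' \<notin> p"
    using loc_set_rep[OF N assms(2)] loc_set_rep[OF N assms(3)] by metis
  then show ?thesis unfolding loc_add_def by (simp add: loc_cls_in_loc_set mult_notin)
qed

lemma loc_smul_in_loc_set:
  assumes N: "subspace N" and "a \<in> loc_set (*) {0} p" and "c \<in> loc_set sc N p"
  shows "loc_smul sc N p a c \<in> loc_set sc N p"
proof -
  obtain r t m s where "loc_rep a = (r, t)" "t \<notin> p" "loc_rep c = (m, s)" "s \<notin> p"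
    using loc_set_ring_rep[OF assms(2)] loc_set_rep[OF N assms(3)] by metis
  then show ?thesis unfolding loc_smul_def by (simp add: loc_cls_in_loc_set mult_notin)
qed

lemma loc_span_subset_loc_set:
  assumes N: "subspace N" and G: "G \<subseteq> loc_set sc N p"
  shows "loc_span sc N p G \<subseteq> loc_set sc N p"
proof
  fix c assume "c \<in> loc_span sc N p G"
  then show "c \<in> loc_set sc N p"
    by induction (use G one_notin in \<open>auto intro: loc_cls_in_loc_set loc_add_in_loc_set[OF N]
        loc_smul_in_loc_set[OF N]\<close>)
qed

text \<open>Whether a class of \<open>(M/N)\<^sub>p\<close> lies in \<open>W\<^sub>p\<close>, for a submodule \<open>W \<supseteq> N\<close>, can be tested on
  any of its representatives.\<close>

lemma loc_cls_locally_in: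
  assumes W: "subspace W" and NW: "N \<subseteq> W" and Y: "Y \<notin> p" and v: "v \<notin> p" "sc v X \<in> W"
    and mem: "(n, r) \<in> loc_cls sc N p X Y"
  shows "\<exists>w. w \<notin> p \<and> sc w n \<in> W"
proof -
  from mem obtain u where u: "u \<notin> p" "sc u (sc r X - sc Y n) \<in> N"
    unfolding loc_cls_def by auto
  have "sc (v * u * Y) n = sc (u * r) (sc v X) - sc v (sc u (sc r X - sc Y n))"
    by (simp add: scale_right_diff_distrib mult_ac)
  also have "\<dots> \<in> W" using u v NW W subspace_scale subspace_diff by blast
  finally show ?thesis using mult_notin[OF mult_notin[OF v(1) u(1)] Y] by blast
qed

lemma loc_span_locally_in:
  assumes N: "subspace N" and W: "subspace W" and NW: "N \<subseteq> W" and G: "G \<subseteq> loc_set sc N p"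
    and hG: "\<And>c n r. c \<in> G \<Longrightarrow> (n, r) \<in> c \<Longrightarrow> \<exists>w. w \<notin> p \<and> sc w n \<in> W"
    and c: "c \<in> loc_span sc N p G" and nr: "(n, r) \<in> c"
  shows "\<exists>w. w \<notin> p \<and> sc w n \<in> W"
  using c nr
proof (induction arbitrary: n r rule: loc_span.induct)
  case zero
  then show ?case using loc_cls_locally_in[OF W NW one_notin one_notin] subspace_0[OF W] by simp
next
  case (gen c)
  then show ?case by (rule hG)
next
  case (add c c')
  have "c \<in> loc_set sc N p" "c' \<in> loc_set sc N p"
    using loc_span_subset_loc_set[OF N G] add.hyps by auto
  then obtain m s m' s' where rep: "loc_rep c = (m, s)" "(m, s) \<in> c" "s \<notin> p"
    "loc_rep c' = (m', s')" "(m', s') \<in> c'" "s' \<notin> p"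
    by (elim loc_set_rep[OF N])
  obtain v v' where v: "v \<notin> p" "sc v m \<in> W" "v' \<notin> p" "sc v' m' \<in> W"
    using add.IH rep by metis
  have "sc (v * v') (sc s' m + sc s m') = sc (s' * v') (sc v m) + sc (s * v) (sc v' m')"
    by (simp add: scale_right_distrib mult_ac)
  also have "\<dots> \<in> W" using v W subspace_add subspace_scale by blast
  finally have "sc (v * v') (sc s' m + sc s m') \<in> W" .
  moreover have "loc_add sc N p c c' = loc_cls sc N p (sc s' m + sc s m') (s * s')"
    unfolding loc_add_def rep(1,4) by simp
  ultimately show ?case
    using add.prems loc_cls_locally_in[OF W NW mult_notin[OF rep(3,6)] mult_notin[OF v(1,3)]] by metis
next
  case (smul a c)
  have "c \<in> loc_set sc N p" using loc_span_subset_loc_set[OF N G] smul.hyps by auto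
  then obtain m s where rep: "loc_rep c = (m, s)" "(m, s) \<in> c" "s \<notin> p"
    by (elim loc_set_rep[OF N])
  obtain r' t where a: "loc_rep a = (r', t)" "t \<notin> p" using loc_set_ring_rep[OF smul.hyps(1)] .
  obtain v where v: "v \<notin> p" "sc v m \<in> W" using smul.IH rep by metis
  have "sc v (sc r' m) \<in> W" using v W subspace_scale scale_left_commute by metis
  moreover have "loc_smul sc N p a c = loc_cls sc N p (sc r' m) (t * s)"
    unfolding loc_smul_def rep(1) a(1) by simp
  ultimately show ?case
    using smul.prems loc_cls_locally_in[OF W NW mult_notin[OF a(2) rep(3)] v(1)] by metis
qed

lemma loc_span_imp_loc_generates:
  assumes N: "subspace N" and G: "G \<subseteq> loc_set sc N p" and fG: "finite G"
    and sp: "loc_span sc N p G = loc_set sc N p"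
  obtains S where "finite S" "card S \<le> card G" "loc_generates sc p N S"
proof -
  have "\<forall>c\<in>G. \<exists>z. snd z \<notin> p \<and> c = loc_cls sc N p (fst z) (snd z)"
    using G unfolding loc_set_def by fastforce
  then obtain rep where rep: "\<And>c. c \<in> G \<Longrightarrow> snd (rep c) \<notin> p \<and> c = loc_cls sc N p (fst (rep c)) (snd (rep c))"
    by metis
  define S where "S = fst ` rep ` G"
  define W where "W = span (S \<union> N)"
  have W: "subspace W" and NW: "N \<subseteq> W" and SW: "S \<subseteq> W"
    unfolding W_def by (auto intro: span_base)
  have "\<exists>w. w \<notin> p \<and> sc w n \<in> W" if "c \<in> G" "(n, r) \<in> c" for c n r
  proof -
    have "(n, r) \<in> loc_cls sc N p (fst (rep c)) (snd (rep c))" using rep[OF that(1)] that(2) by simp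
    moreover have "sc 1 (fst (rep c)) \<in> W" using SW that(1) unfolding S_def by auto
    ultimately show ?thesis using loc_cls_locally_in[OF W NW _ one_notin] rep[OF that(1)] by blast
  qed
  then have "\<exists>w. w \<notin> p \<and> sc w m \<in> W" for m
    using loc_span_locally_in[OF N W NW G] sp loc_cls_in_loc_set[OF one_notin] loc_cls_self[OF N one_notin]
    by blast
  then have "loc_generates sc p N S" unfolding loc_generates_def W_def by blast
  moreover have "finite S" "card S \<le> card G"
    unfolding S_def using fG card_image_le[of "rep ` G" fst] card_image_le[of G rep] by auto
  ultimately show thesis using that by blast
qed

lemma subspace_loc_span_preimage:
  assumes N: "subspace N"
  shows "subspace {m. loc_cls sc N p m 1 \<in> loc_span sc N p G}"
proof (rule subspaceI)
  let ?L = "loc_span sc N p G"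
  show "0 \<in> {m. loc_cls sc N p m 1 \<in> ?L}" by (simp add: loc_span.zero)
  show "x + y \<in> {m. loc_cls sc N p m 1 \<in> ?L}"
    if "x \<in> {m. loc_cls sc N p m 1 \<in> ?L}" "y \<in> {m. loc_cls sc N p m 1 \<in> ?L}" for x y
    using that loc_span.add loc_add_cls[OF N one_notin one_notin, of x y] by fastforce
  show "sc c x \<in> {m. loc_cls sc N p m 1 \<in> ?L}" if "x \<in> {m. loc_cls sc N p m 1 \<in> ?L}" for c x
  proof -
    have "loc_smul sc N p (loc_cls (*) {0} p c 1) (loc_cls sc N p x 1) \<in> ?L"
      using that by (simp add: loc_span.smul loc_cls_in_loc_set one_notin)
    then show ?thesis using loc_smul_cls[OF N one_notin one_notin, of c x] by simp
  qed
qed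

lemma loc_generates_imp_loc_span:
  assumes N: "subspace N" and fS: "finite S" and g: "loc_generates sc p N S"
  obtains G where "G \<subseteq> loc_set sc N p" "finite G" "card G \<le> card S"
    "loc_span sc N p G = loc_set sc N p"
proof -
  define G where "G = (\<lambda>m. loc_cls sc N p m 1) ` S"
  let ?L = "loc_span sc N p G"
  have G: "G \<subseteq> loc_set sc N p" unfolding G_def using loc_cls_in_loc_set[OF one_notin] by blast
  have spS: "span S \<subseteq> {m. loc_cls sc N p m 1 \<in> ?L}"
    by (rule span_minimal[OF _ subspace_loc_span_preimage[OF N]]) (auto simp: G_def intro: loc_span.gen)
  have "c \<in> ?L" if c_loc: "c \<in> loc_set sc N p" for c
  proof -
    obtain m t where c: "c = loc_cls sc N p m t" "t \<notin> p" using c_loc unfolding loc_set_def by blast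
    obtain v where v: "v \<notin> p" "sc v m \<in> span (S \<union> N)" using g unfolding loc_generates_def by blast
    then obtain y n where yn: "sc v m = y + n" "y \<in> span S" "n \<in> N"
      using span_Un[of S N] span_eq_iff[THEN iffD2, OF N] by auto
    have vt: "v * t \<notin> p" using mult_notin[OF v(1) c(2)] .
    have "loc_smul sc N p (loc_cls (*) {0} p 1 (v * t)) (loc_cls sc N p y 1) \<in> ?L"
      using spS yn(2) by (auto intro!: loc_span.smul loc_cls_in_loc_set vt)
    then have yL: "loc_cls sc N p y (v * t) \<in> ?L"
      using loc_smul_cls[OF N one_notin vt, of 1 y] by simp
    have "sc (v * t) m = sc t y + sc t n"
      using yn(1) by (metis scale_scale mult.commute scale_right_distrib)
    then have "sc 1 (sc t y - sc (v * t) m) = - sc t n" by simp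
    then have "sc 1 (sc t y - sc (v * t) m) \<in> N" using yn(3) N subspace_neg subspace_scale by metis
    then show ?thesis using loc_cls_eq[OF N vt c(2) one_notin] yL c(1) by simp
  qed
  then have "?L = loc_set sc N p" using loc_span_subset_loc_set[OF N G] by blast
  moreover have "finite G" "card G \<le> card S" unfolding G_def using fS card_image_le by auto
  ultimately show thesis using that G by blast
qed

lemma mu_loc_le:
  assumes N: "subspace N" and fS: "finite S" and g: "loc_generates sc p N S"
  shows "mu_loc sc N p \<le> card S"
proof -
  obtain G where G: "G \<subseteq> loc_set sc N p" "finite G" "card G \<le> card S"
    "loc_span sc N p G = loc_set sc N p"
    using loc_generates_imp_loc_span[OF N fS g] .
  have "mu_loc sc N p \<le> card G" unfolding mu_loc_def by (rule Least_le) (use G in blast)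
  then show ?thesis using G by simp
qed

lemma loc_generates_mu_loc:
  assumes N: "subspace N" and fS0: "finite S0" and g0: "loc_generates sc p N S0"
  obtains S where "finite S" "loc_generates sc p N S" "card S = mu_loc sc N p"
proof -
  obtain G0 where G0: "G0 \<subseteq> loc_set sc N p" "finite G0" "loc_span sc N p G0 = loc_set sc N p"
    using loc_generates_imp_loc_span[OF N fS0 g0] by metis
  have "\<exists>G. G \<subseteq> loc_set sc N p \<and> finite G \<and> card G = mu_loc sc N p \<and> loc_span sc N p G = loc_set sc N p"
    unfolding mu_loc_def by (rule LeastI[of _ "card G0"]) (use G0 in blast)
  then obtain G where G: "G \<subseteq> loc_set sc N p" "finite G" "card G = mu_loc sc N p"
    "loc_span sc N p G = loc_set sc N p" by blast
  obtain S where S: "finite S" "card S \<le> card G" "loc_generates sc p N S"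
    using loc_span_imp_loc_generates[OF N G(1,2,4)] .
  show thesis using that[OF S(1,3)] S(2) G(3) mu_loc_le[OF N S(1,3)] by simp
qed

lemma loc_generates_0_iff: "loc_generates sc p {0} S \<longleftrightarrow> (\<forall>m. \<exists>u. u \<notin> p \<and> sc u m \<in> span S)"
proof -
  have "span (S \<union> {0}) = span S" by (simp add: span_eq span_zero span_superset subset_eq span_base)
  then show ?thesis unfolding loc_generates_def by simp
qed

lemma cyclic_submodule_eq_span: "{sc r x | r. True} = span {x}"
  unfolding span_singleton by auto

lemma loc_generates_cyclic_iff:
  "loc_generates sc p {sc r x | r. True} S \<longleftrightarrow> loc_generates sc p {0} (insert x S)"
proof -
  have "span {x} \<subseteq> span (insert x S)" by (rule span_mono) simp
  then have "span (S \<union> span {x}) = span (insert x S)"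
    unfolding span_eq by (auto intro: span_base)
  then show ?thesis
    unfolding loc_generates_0_iff unfolding loc_generates_def cyclic_submodule_eq_span by simp
qed

lemma subspace_ideal_multiples_single: "subspace (ideal_multiples sc p {t})"
proof (rule subspaceI)
  have I: "is_ideal p" using prime by (rule prime_ideal_is_ideal)
  show "0 \<in> ideal_multiples sc p {t}"
    unfolding ideal_multiples_def using ideal_0[OF I] by (auto intro!: exI[of _ 0])
  show "x + y \<in> ideal_multiples sc p {t}"
    if "x \<in> ideal_multiples sc p {t}" "y \<in> ideal_multiples sc p {t}" for x y
    using that ideal_add[OF I] unfolding ideal_multiples_def by (auto simp flip: scale_left_distrib)
  show "sc c x \<in> ideal_multiples sc p {t}" if "x \<in> ideal_multiples sc p {t}" for c x
    using that ideal_mult_left[OF I] unfolding ideal_multiples_def by auto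
qed

lemma span_ideal_multiples_insert:
  assumes "z \<in> span (ideal_multiples sc p (insert t T))"
  obtains a q where "a \<in> p" "q \<in> span (ideal_multiples sc p T)" "z = sc a t + q"
proof -
  have "ideal_multiples sc p (insert t T) = ideal_multiples sc p {t} \<union> ideal_multiples sc p T"
    unfolding ideal_multiples_def by blast
  then obtain y q where "z = y + q" "y \<in> ideal_multiples sc p {t}" "q \<in> span (ideal_multiples sc p T)"
    using assms span_Un span_eq_iff[THEN iffD2, OF subspace_ideal_multiples_single] by auto
  then show thesis using that unfolding ideal_multiples_def by blast
qed

text \<open>Nakayama's lemma over \<open>R\<^sub>p\<close>, proved by removing one generator at a time: if
  \<open>u t = a t + q\<close> with \<open>a \<in> p\<close> and \<open>q\<close> a \<open>p\<close>-combination of the other generators, then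
  \<open>u - a \<notin> p\<close> becomes invertible in \<open>R\<^sub>p\<close> and \<open>t\<close> can be dropped.\<close>

lemma nakayama_loc:
  assumes "finite T"
    and "\<forall>m. \<exists>u. u \<notin> p \<and> sc u m \<in> span T"
    and "\<forall>t\<in>T. \<exists>u. u \<notin> p \<and> sc u t \<in> span (ideal_multiples sc p T)"
  shows "loc_trivial sc p"
  using assms
proof (induction T rule: finite_induct)
  case empty
  then show ?case unfolding loc_trivial_def by simp
next
  case (insert t T)
  have I: "is_ideal p" using prime by (rule prime_ideal_is_ideal)
  obtain u where u: "u \<notin> p" "sc u t \<in> span (ideal_multiples sc p (insert t T))"
    using insert.prems(2) by blast
  obtain a q where aq: "a \<in> p" "q \<in> span (ideal_multiples sc p T)" "sc u t = sc a t + q"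
    using span_ideal_multiples_insert[OF u(2)] .
  define w where "w = u - a"
  have w: "w \<notin> p" unfolding w_def using ideal_diff_notin[OF I u(1) aq(1)] .
  have wt: "sc w t = q" unfolding w_def using aq(3) by (simp add: scale_left_diff_distrib)
  have "ideal_multiples sc p T \<subseteq> span T"
    unfolding ideal_multiples_def by (auto intro: span_scale span_base)
  then have qT: "q \<in> span T" using aq(2) span_mono span_span by blast
  have "\<exists>u. u \<notin> p \<and> sc u m \<in> span T" for m
  proof -
    obtain v where v: "v \<notin> p" "sc v m \<in> span (insert t T)" using insert.prems(1) by blast
    then obtain k where k: "sc v m - sc k t \<in> span T" using span_breakdown_eq by blast
    have "sc (w * v) m = sc k (sc w t) + sc w (sc v m - sc k t)"
      by (simp add: scale_right_diff_distrib mult.commute)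
    also have "\<dots> = sc k q + sc w (sc v m - sc k t)" unfolding wt ..
    also have "\<dots> \<in> span T" using qT k by (intro span_add span_scale)
    finally show ?thesis using mult_notin[OF w v(1)] by blast
  qed
  moreover have "\<exists>u. u \<notin> p \<and> sc u t' \<in> span (ideal_multiples sc p T)" if t': "t' \<in> T" for t'
  proof -
    obtain u' where u': "u' \<notin> p" "sc u' t' \<in> span (ideal_multiples sc p (insert t T))"
      using insert.prems(2) t' by blast
    obtain a' q' where aq': "a' \<in> p" "q' \<in> span (ideal_multiples sc p T)" "sc u' t' = sc a' t + q'"
      using span_ideal_multiples_insert[OF u'(2)] .
    have "sc (w * u') t' = sc w (sc a' t + q')" by (simp add: flip: aq'(3))
    also have "\<dots> = sc a' (sc w t) + sc w q'" by (simp add: scale_right_distrib mult.commute)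
    also have "\<dots> = sc a' q + sc w q'" unfolding wt ..
    also have "\<dots> \<in> span (ideal_multiples sc p T)" using aq(2) aq'(2) by (intro span_add span_scale)
    finally show ?thesis using mult_notin[OF w u'(1)] by blast
  qed
  ultimately show ?case using insert.IH by blast
qed

lemma loc_trivial_if_generators_vanish:
  assumes fT: "finite T" and sp: "span T = UNIV" and van: "\<forall>t\<in>T. fibre_vanishes sc p t"
  shows "loc_trivial sc p"
proof (rule nakayama_loc[OF fT])
  show "\<forall>m. \<exists>u. u \<notin> p \<and> sc u m \<in> span T" using sp one_notin by auto
  have "subspace {m. \<forall>a\<in>p. sc a m \<in> span (ideal_multiples sc p T)}"
    using ideal_mult_right[OF prime_ideal_is_ideal[OF prime]]
    by (intro subspaceI) (auto simp: scale_right_distrib span_add span_zero)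
  moreover have "T \<subseteq> {m. \<forall>a\<in>p. sc a m \<in> span (ideal_multiples sc p T)}"
    unfolding ideal_multiples_def by (auto intro: span_base)
  ultimately have "ideal_multiples sc p UNIV \<subseteq> span (ideal_multiples sc p T)"
    using span_minimal[of T] sp unfolding ideal_multiples_def by auto
  then have "span (ideal_multiples sc p UNIV) \<subseteq> span (ideal_multiples sc p T)"
    by (simp add: span_minimal)
  then show "\<forall>t\<in>T. \<exists>u. u \<notin> p \<and> sc u t \<in> span (ideal_multiples sc p T)"
    using van unfolding fibre_vanishes_def by blast
qed

lemma mu_loc_0_if_loc_trivial:
  assumes "loc_trivial sc p"
  shows "mu_loc sc {0} p = 0"
proof -
  have "loc_generates sc p {0} {}"
    using assms unfolding loc_trivial_def loc_generates_0_iff by simp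
  then show ?thesis using mu_loc_le[of "{0}" "{}"] by simp
qed

lemma subspace_fibre_vanishes: "subspace {x. fibre_vanishes sc p x}"
proof (rule subspaceI)
  let ?Q = "span (ideal_multiples sc p UNIV)"
  show "0 \<in> {x. fibre_vanishes sc p x}"
    unfolding fibre_vanishes_def using one_notin span_zero by auto
  show "x + y \<in> {x. fibre_vanishes sc p x}"
    if xy: "x \<in> {x. fibre_vanishes sc p x}" "y \<in> {x. fibre_vanishes sc p x}" for x y
  proof -
    obtain u v where uv: "u \<notin> p" "sc u x \<in> ?Q" "v \<notin> p" "sc v y \<in> ?Q"
      using xy unfolding fibre_vanishes_def by blast
    have "sc (u * v) (x + y) = sc v (sc u x) + sc u (sc v y)"
      by (simp add: scale_right_distrib mult.commute)
    also have "\<dots> \<in> ?Q" using span_add[OF span_scale[OF uv(2)] span_scale[OF uv(4)]] .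
    finally show ?thesis using mult_notin[OF uv(1,3)] unfolding fibre_vanishes_def by blast
  qed
  show "sc c x \<in> {x. fibre_vanishes sc p x}" if x: "x \<in> {x. fibre_vanishes sc p x}" for c x
  proof -
    obtain u where u: "u \<notin> p" "sc u x \<in> ?Q" using x unfolding fibre_vanishes_def by blast
    have "sc u (sc c x) = sc c (sc u x)" by (rule scale_left_commute)
    then show ?thesis using u span_scale[OF u(2)] unfolding fibre_vanishes_def by auto
  qed
qed

lemma loc_generates_exchange:
  assumes fS: "finite S" and g: "loc_generates sc p {0} S" and x: "\<not> fibre_vanishes sc p x"
  obtains y where "y \<in> S" "loc_generates sc p {0} (insert x (S - {y}))"
proof -
  obtain u where u: "u \<notin> p" "sc u x \<in> span S" using g unfolding loc_generates_0_iff by blast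
  then obtain a where a: "sc u x = (\<Sum>v\<in>S. sc (a v) v)" using span_finite[OF fS] by auto
  have "\<exists>y\<in>S. a y \<notin> p"
  proof (rule ccontr)
    assume "\<not> ?thesis"
    then have "(\<Sum>v\<in>S. sc (a v) v) \<in> span (ideal_multiples sc p UNIV)"
      unfolding ideal_multiples_def by (intro span_sum) (auto intro: span_base)
    then show False using x u a unfolding fibre_vanishes_def by auto
  qed
  then obtain y where y: "y \<in> S" "a y \<notin> p" by blast
  define W where "W = span (insert x (S - {y}))"
  have "sc (a y) y = sc u x - (\<Sum>v\<in>S - {y}. sc (a v) v)"
    using a sum.remove[OF fS y(1), of "\<lambda>v. sc (a v) v"] by simp
  also have "\<dots> \<in> W" unfolding W_def by (intro span_diff span_scale span_sum) (auto intro: span_base)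
  finally have ay: "sc (a y) y \<in> W" .
  have "subspace {z. sc (a y) z \<in> W}"
  proof (rule subspaceI)
    show "sc c z \<in> {z. sc (a y) z \<in> W}" if "z \<in> {z. sc (a y) z \<in> W}" for c z
      using that span_scale[of "sc (a y) z" _ c] scale_left_commute[of "a y" c z] unfolding W_def by simp
  qed (auto simp: W_def span_zero scale_right_distrib span_add)
  moreover have "S \<subseteq> {z. sc (a y) z \<in> W}"
    using ay unfolding W_def by (auto intro: span_scale span_base)
  ultimately have spS: "span S \<subseteq> {z. sc (a y) z \<in> W}" by (simp add: span_minimal)
  have "\<exists>w. w \<notin> p \<and> sc w m \<in> W" for m
  proof -
    obtain w where w: "w \<notin> p" "sc w m \<in> span S" using g unfolding loc_generates_0_iff by blast
    then have "sc (a y * w) m \<in> W" using spS by auto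
    then show ?thesis using mult_notin[OF y(2) w(1)] by blast
  qed
  then show thesis using that[OF y(1)] unfolding loc_generates_0_iff W_def by blast
qed

lemma loc_generates_mono:
  "loc_generates sc p {0} S \<Longrightarrow> S \<subseteq> T \<Longrightarrow> loc_generates sc p {0} T"
  unfolding loc_generates_0_iff using span_mono by blast

text \<open>Passing from \<open>M\<^sub>p\<close> to \<open>(M/Rx)\<^sub>p\<close> removes exactly one generator once \<open>x\<close> survives in
  the fibre: a minimal generating set of \<open>M\<^sub>p\<close> can be exchanged to contain \<open>x\<close>, and
  conversely \<open>x\<close> together with generators of \<open>(M/Rx)\<^sub>p\<close> generates \<open>M\<^sub>p\<close>.\<close>

lemma mu_loc_quotient_cyclic:
  assumes fS: "finite S" and g: "loc_generates sc p {0} S"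
    and x: "mu_loc sc {0} p = 0 \<or> \<not> fibre_vanishes sc p x"
  shows "int (mu_loc sc {sc r x | r. True} p) = max 0 (int (mu_loc sc {0} p) - 1)"
proof -
  let ?Rx = "{sc r x | r. True}"
  have Rx: "subspace ?Rx" unfolding cyclic_submodule_eq_span by simp
  obtain S0 where S0: "finite S0" "loc_generates sc p {0} S0" "card S0 = mu_loc sc {0} p"
    using loc_generates_mu_loc[OF subspace_single_0 fS g] .
  have "loc_generates sc p ?Rx S0"
    unfolding loc_generates_cyclic_iff using loc_generates_mono[OF S0(2)] by blast
  then obtain S1 where S1: "finite S1" "loc_generates sc p ?Rx S1" "card S1 = mu_loc sc ?Rx p"
    using loc_generates_mu_loc[OF Rx S0(1)] by blast
  have le1: "mu_loc sc ?Rx p \<le> mu_loc sc {0} p"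
    using mu_loc_le[OF Rx S0(1) \<open>loc_generates sc p ?Rx S0\<close>] S0(3) by simp
  have "mu_loc sc {0} p \<le> card (insert x S1)"
    using mu_loc_le[OF subspace_single_0] S1(1,2) unfolding loc_generates_cyclic_iff by simp
  also have "\<dots> \<le> mu_loc sc ?Rx p + 1" using S1(1,3) card_insert_le_m1 by (simp add: card_insert_if)
  finally have le2: "mu_loc sc {0} p \<le> mu_loc sc ?Rx p + 1" .
  show ?thesis
  proof (cases "mu_loc sc {0} p = 0")
    case True
    then show ?thesis using le1 by simp
  next
    case False
    then have "\<not> fibre_vanishes sc p x" using x by (simp only: simp_thms)
    then obtain y where y: "y \<in> S0" "loc_generates sc p {0} (insert x (S0 - {y}))"
      using loc_generates_exchange[OF S0(1,2)] by blast
    have "mu_loc sc ?Rx p \<le> card (S0 - {y})"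
      using mu_loc_le[OF Rx] S0(1) y(2) unfolding loc_generates_cyclic_iff by simp
    then show ?thesis using y(1) S0(1,3) le2 by (simp add: card_Diff_singleton)
  qed
qed

end

section \<open>Homogeneous components\<close>

lemma internal_dsum_0: "internal_dsum G \<Longrightarrow> 0 \<in> G i"
  and internal_dsum_add: "internal_dsum G \<Longrightarrow> a \<in> G i \<Longrightarrow> b \<in> G i \<Longrightarrow> a + b \<in> G i"
  and internal_dsum_uminus: "internal_dsum G \<Longrightarrow> a \<in> G i \<Longrightarrow> - a \<in> G i"
  unfolding internal_dsum_def by blast+

lemma decomp_ok_hcomp: "internal_dsum G \<Longrightarrow> decomp_ok G (\<lambda>i. hcomp G i r) r"
proof -
  assume D: "internal_dsum G"
  then have "\<exists>!f. decomp_ok G f r" unfolding internal_dsum_def by blast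
  from theI'[OF this] show ?thesis unfolding hcomp_def by simp
qed

lemma hcomp_eqI: "internal_dsum G \<Longrightarrow> decomp_ok G f r \<Longrightarrow> hcomp G i r = f i"
  using decomp_ok_hcomp[of G r] unfolding internal_dsum_def by metis

lemma hcomp_mem: "internal_dsum G \<Longrightarrow> hcomp G i r \<in> G i"
  and hcomp_finite_support: "internal_dsum G \<Longrightarrow> finite {i. hcomp G i r \<noteq> 0}"
  and sum_hcomp: "internal_dsum G \<Longrightarrow> (\<Sum>i\<in>{i. hcomp G i r \<noteq> 0}. hcomp G i r) = r"
  using decomp_ok_hcomp[of G r] unfolding decomp_ok_def by auto

lemma hcomp_homogeneous:
  assumes D: "internal_dsum G" and x: "x \<in> G e"
  shows "hcomp G i x = (if i = e then x else 0)"
proof (rule hcomp_eqI[OF D])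
  have "{i. (if i = e then x else 0) \<noteq> 0} = (if x = 0 then {} else {e})" by auto
  then show "decomp_ok G (\<lambda>i. if i = e then x else 0) x"
    unfolding decomp_ok_def using x internal_dsum_0[OF D] by auto
qed

lemma hcomp_0: "internal_dsum G \<Longrightarrow> hcomp G i 0 = 0"
  using hcomp_homogeneous[of G 0 i i] internal_dsum_0[of G i] by simp

lemma hcomp_add:
  assumes D: "internal_dsum G"
  shows "hcomp G i (a + b) = hcomp G i a + hcomp G i b"
proof -
  define U where "U = {j. hcomp G j a \<noteq> 0} \<union> {j. hcomp G j b \<noteq> 0}"
  have fU: "finite U" unfolding U_def using hcomp_finite_support[OF D] by blast
  have sum_U: "(\<Sum>j\<in>U. hcomp G j r) = r" if "{j. hcomp G j r \<noteq> 0} \<subseteq> U" for r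
    using sum.mono_neutral_left[OF fU that, of "\<lambda>j. hcomp G j r"] sum_hcomp[OF D, of r] by simp
  let ?f = "\<lambda>j. hcomp G j a + hcomp G j b"
  have supp: "{j. ?f j \<noteq> 0} \<subseteq> U" unfolding U_def by auto
  have "a + b = (\<Sum>j\<in>U. ?f j)"
    using sum_U[of a] sum_U[of b] by (simp add: U_def sum.distrib)
  also have "\<dots> = (\<Sum>j\<in>{j. ?f j \<noteq> 0}. ?f j)" by (rule sum.mono_neutral_right[OF fU supp]) auto
  finally have "decomp_ok G ?f (a + b)"
    unfolding decomp_ok_def using finite_subset[OF supp fU] hcomp_mem[OF D] internal_dsum_add[OF D]
    by blast
  then show ?thesis by (rule hcomp_eqI[OF D])
qed

lemma hcomp_sum:
  assumes "internal_dsum G" and "finite K"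
  shows "hcomp G i (\<Sum>k\<in>K. h k) = (\<Sum>k\<in>K. hcomp G i (h k))"
  using assms(2) by induction (simp_all add: hcomp_0[OF assms(1)] hcomp_add[OF assms(1)])

section \<open>The Artinian local base ring\<close>

locale artinian_local_base =
  fixes Rg :: "nat \<Rightarrow> 'r::comm_ring_1 set" and m0 :: "'r set"
  assumes graded: "graded_ring Rg"
    and artinian: "artinian_subring (Rg 0)"
    and local: "local_with_max (Rg 0) m0"
begin

lemma dsum_Rg: "internal_dsum Rg"
  using graded unfolding graded_ring_def by blast

lemma mult_degree: "a \<in> Rg i \<Longrightarrow> b \<in> Rg j \<Longrightarrow> a * b \<in> Rg (i + j)"
  using graded unfolding graded_ring_def by blast

lemma R0_one: "1 \<in> Rg 0"
  using graded unfolding graded_ring_def by blast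

lemma R0_mult: "a \<in> Rg 0 \<Longrightarrow> b \<in> Rg 0 \<Longrightarrow> a * b \<in> Rg 0"
  using mult_degree[of a 0 b 0] by simp

lemma R0_diff: "a \<in> Rg 0 \<Longrightarrow> b \<in> Rg 0 \<Longrightarrow> a - b \<in> Rg 0"
  using internal_dsum_add[OF dsum_Rg, of a 0 "- b"] internal_dsum_uminus[OF dsum_Rg, of b 0] by simp

lemma max_ideal: "ideal_in (Rg 0) m0"
  and one_notin_max: "1 \<notin> m0"
  and ideal_subset_max: "ideal_in (Rg 0) J \<Longrightarrow> 1 \<notin> J \<Longrightarrow> J \<subseteq> m0"
  using local unfolding local_with_max_def by blast+

lemma max_subset_R0: "m0 \<subseteq> Rg 0"
  and max_add: "a \<in> m0 \<Longrightarrow> b \<in> m0 \<Longrightarrow> a + b \<in> m0"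
  and max_mult: "r \<in> Rg 0 \<Longrightarrow> a \<in> m0 \<Longrightarrow> r * a \<in> m0"
  using max_ideal unfolding ideal_in_def by blast+

lemma max_diff: "a \<in> m0 \<Longrightarrow> b \<in> m0 \<Longrightarrow> a - b \<in> m0"
  using max_add[of a "- 1 * b"] max_mult[of "- 1" b]
    internal_dsum_uminus[OF dsum_Rg R0_one] by simp

lemma one_minus_notin_max: "a \<in> m0 \<Longrightarrow> 1 - a \<notin> m0"
  using max_add[of "1 - a" a] one_notin_max by auto

lemma principal_ideal_in_R0:
  assumes c: "c \<in> Rg 0"
  shows "ideal_in (Rg 0) {c * b | b. b \<in> Rg 0}"
  unfolding ideal_in_def
proof (intro conjI ballI)
  show "{c * b | b. b \<in> Rg 0} \<subseteq> Rg 0" using c R0_mult by blast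
  show "0 \<in> {c * b | b. b \<in> Rg 0}" using internal_dsum_0[OF dsum_Rg] by (auto intro!: exI[of _ 0])
  show "x + y \<in> {c * b | b. b \<in> Rg 0}"
    if xy: "x \<in> {c * b | b. b \<in> Rg 0}" "y \<in> {c * b | b. b \<in> Rg 0}" for x y
  proof -
    obtain b b' where "x = c * b" "y = c * b'" "b \<in> Rg 0" "b' \<in> Rg 0" using xy by blast
    then show ?thesis
      using internal_dsum_add[OF dsum_Rg] by (auto intro!: exI[of _ "b + b'"] simp: distrib_left)
  qed
  show "r * x \<in> {c * b | b. b \<in> Rg 0}" if rx: "r \<in> Rg 0" "x \<in> {c * b | b. b \<in> Rg 0}" for r x
  proof -
    obtain b where "x = c * b" "b \<in> Rg 0" using rx(2) by blast
    then show ?thesis using R0_mult rx(1) by (auto intro!: exI[of _ "r * b"] simp: mult_ac)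
  qed
qed

lemma unit_if_notin_max:
  assumes a: "a \<in> Rg 0" "a \<notin> m0"
  obtains b where "b \<in> Rg 0" "b * a = 1"
proof -
  let ?J = "{a * b | b. b \<in> Rg 0}"
  have "a \<in> ?J" using R0_one by (auto intro!: exI[of _ 1])
  then have "1 \<in> ?J" using ideal_subset_max[OF principal_ideal_in_R0[OF a(1)]] a(2) by blast
  then show thesis using that by (auto simp: mult.commute)
qed

lemma prime_inter_R0_subset_max:
  assumes p: "prime_ideal p"
  shows "p \<inter> Rg 0 \<subseteq> m0"
proof (rule ideal_subset_max)
  have I: "is_ideal p" using p by (rule prime_ideal_is_ideal)
  show "ideal_in (Rg 0) (p \<inter> Rg 0)"
    unfolding ideal_in_def
    by (simp add: ideal_0[OF I] ideal_add[OF I] ideal_mult_left[OF I]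
        internal_dsum_0[OF dsum_Rg] internal_dsum_add[OF dsum_Rg] R0_mult)
  show "1 \<notin> p \<inter> Rg 0" using prime_ideal_one_notin[OF p] by blast
qed

lemma artinian_power_stable:
  assumes a: "a \<in> Rg 0"
  obtains N b where "b \<in> Rg 0" "a ^ N = a ^ Suc N * b"
proof -
  define f where "f n = {a ^ n * b | b. b \<in> Rg 0}" for n
  have "a ^ n \<in> Rg 0" for n by (induction n) (simp_all add: R0_one R0_mult a)
  then have "ideal_in (Rg 0) (f n)" for n unfolding f_def by (rule principal_ideal_in_R0)
  moreover have "f (Suc n) \<subseteq> f n" for n
  proof
    fix x assume "x \<in> f (Suc n)"
    then obtain b where "x = a ^ Suc n * b" "b \<in> Rg 0" unfolding f_def by blast
    then show "x \<in> f n" unfolding f_def using a R0_mult by (auto intro!: exI[of _ "a * b"] simp: mult_ac)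
  qed
  ultimately obtain N where N: "\<forall>n\<ge>N. f n = f N" using artinian unfolding artinian_subring_def by blast
  have "a ^ N \<in> f N" unfolding f_def using R0_one by (auto intro!: exI[of _ 1])
  moreover have "f (Suc N) = f N" using N[rule_format, of "Suc N"] by simp
  ultimately have "a ^ N \<in> f (Suc N)" by simp
  then show thesis using that unfolding f_def by blast
qed

text \<open>In an Artinian ring every prime is maximal; here this shows up as \<open>m\<^sub>0 \<subseteq> p\<close>.\<close>

lemma max_subset_prime:
  assumes p: "prime_ideal p"
  shows "m0 \<subseteq> p"
proof
  fix a assume am: "a \<in> m0"
  show "a \<in> p"
  proof (rule ccontr)
    assume ap: "a \<notin> p"
    have aR: "a \<in> Rg 0" using am max_subset_R0 by blast
    obtain N b where b: "b \<in> Rg 0" "a ^ N = a ^ Suc N * b" using artinian_power_stable[OF aR] .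
    have "a ^ N * (1 - a * b) = a ^ N - a ^ Suc N * b" by (simp add: algebra_simps)
    also have "\<dots> = 0" by (subst b(2)) simp
    finally have "a ^ N * (1 - a * b) \<in> p" using ideal_0[OF prime_ideal_is_ideal[OF p]] by simp
    then have "1 - a * b \<in> p"
      using prime_ideal_power_notin[OF p ap, of N] p unfolding prime_ideal_def by blast
    moreover have "1 - a * b \<in> Rg 0" using R0_diff[OF R0_one R0_mult[OF aR b(1)]] .
    ultimately have "1 - a * b \<in> m0" using prime_inter_R0_subset_max[OF p] by blast
    moreover have "a * b \<in> m0" using max_mult[OF b(1) am] by (simp add: mult.commute)
    ultimately show False using one_minus_notin_max by blast
  qed
qed

lemma exists_incongruent_elements:
  assumes inf: "infinite (residue_field (Rg 0) m0)"
  obtains L where "L \<subseteq> Rg 0" "finite L" "card L = n" "\<forall>a\<in>L. \<forall>b\<in>L. a \<noteq> b \<longrightarrow> a - b \<notin> m0"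
proof -
  define cl where "cl a = {b \<in> Rg 0. a - b \<in> m0}" for a
  have cl_eq: "cl a = cl b" if "a - b \<in> m0" for a b
  proof -
    have "a - x \<in> m0 \<longleftrightarrow> b - x \<in> m0" for x
      using max_add[OF that, of "b - x"] max_diff[of "a - x" "a - b"] that by auto
    then show ?thesis unfolding cl_def by blast
  qed
  obtain C where C: "C \<subseteq> cl ` Rg 0" "finite C" "card C = n"
    using infinite_arbitrarily_large[OF inf] unfolding residue_field_def cl_def by blast
  define f where "f = inv_into (Rg 0) cl"
  have f: "f c \<in> Rg 0" "cl (f c) = c" if c: "c \<in> C" for c
  proof -
    have "c \<in> cl ` Rg 0" using C(1) c by blast
    then show "f c \<in> Rg 0" "cl (f c) = c" unfolding f_def by (simp_all add: inv_into_into f_inv_into_f)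
  qed
  then have inj: "inj_on f C" by (metis inj_onI)
  show thesis
  proof (rule that[of "f ` C"])
    show "f ` C \<subseteq> Rg 0" "finite (f ` C)" "card (f ` C) = n"
      using f(1) C(2,3) card_image[OF inj] by auto
    show "\<forall>a\<in>f ` C. \<forall>b\<in>f ` C. a \<noteq> b \<longrightarrow> a - b \<notin> m0"
    proof (intro ballI impI notI)
      fix a b assume ab: "a \<in> f ` C" "b \<in> f ` C" "a \<noteq> b" "a - b \<in> m0"
      then obtain c c' where c: "c \<in> C" "c' \<in> C" "a = f c" "b = f c'" by blast
      then have "c = c'" using f(2)[OF c(1)] f(2)[OF c(2)] cl_eq[OF ab(4)] by simp
      then show False using ab(3) c by simp
    qed
  qed
qed

text \<open>If \<open>x \<in> V\<close> lies in \<open>B\<close> but in none of the \<open>B' \<in> F\<close> and \<open>y \<in> V - B\<close>, then the elements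
  \<open>y + \<lambda> x\<close> all avoid \<open>B\<close>, and two of them with \<open>\<lambda> - \<lambda>' \<notin> m\<^sub>0\<close> cannot lie in the same \<open>B'\<close>;
  so \<open>|F| + 1\<close> pairwise incongruent values of \<open>\<lambda>\<close> suffice.\<close>

lemma avoidance_step:
  assumes M: "module sc"
    and Vadd: "\<And>x y. x \<in> V \<Longrightarrow> y \<in> V \<Longrightarrow> x + y \<in> V"
    and Vsc: "\<And>a x. a \<in> Rg 0 \<Longrightarrow> x \<in> V \<Longrightarrow> sc a x \<in> V"
    and inf: "infinite (residue_field (Rg 0) m0)"
    and fF: "finite F" and F: "\<And>B'. B' \<in> F \<Longrightarrow> module.subspace sc B'" and B: "module.subspace sc B"
    and x: "x \<in> V" "x \<in> B" "\<forall>B'\<in>F. x \<notin> B'" and y: "y \<in> V" "y \<notin> B"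
  obtains z where "z \<in> V" "z \<notin> B" "\<forall>B'\<in>F. z \<notin> B'"
proof -
  interpret module sc by (rule M)
  obtain L where L: "L \<subseteq> Rg 0" "finite L" "card L = card F + 1"
    "\<forall>a\<in>L. \<forall>b\<in>L. a \<noteq> b \<longrightarrow> a - b \<notin> m0"
    by (rule exists_incongruent_elements[OF inf])
  define z where "z l = y + sc l x" for l
  have zB: "z l \<notin> B" for l
  proof
    assume "z l \<in> B"
    then have "z l - sc l x \<in> B" using subspace_diff[OF B _ subspace_scale[OF B x(2)]] by blast
    then show False using y(2) unfolding z_def by simp
  qed
  have "\<exists>l\<in>L. \<forall>B'\<in>F. z l \<notin> B'"
  proof (rule ccontr)
    assume "\<not> ?thesis"
    then obtain h where h: "\<forall>l\<in>L. h l \<in> F \<and> z l \<in> h l" by metis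
    have "\<not> inj_on h L"
    proof
      assume "inj_on h L"
      then have "card L \<le> card F" using h card_inj_on_le[OF _ _ fF] by blast
      then show False using L(3) by simp
    qed
    then obtain l l' where ll: "l \<in> L" "l' \<in> L" "l \<noteq> l'" "h l = h l'"
      unfolding inj_on_def by blast
    have B': "subspace (h l)" using F h ll(1) by blast
    have "sc (l - l') x = z l - z l'" unfolding z_def by (simp add: scale_left_diff_distrib)
    also have "\<dots> \<in> h l" using h ll(1,2,4) subspace_diff[OF B'] by force
    finally have i: "sc (l - l') x \<in> h l" .
    have "l - l' \<in> Rg 0" using L(1) ll(1,2) R0_diff by blast
    moreover have "l - l' \<notin> m0" using L(4) ll(1-3) by blast
    ultimately obtain b where b: "b * (l - l') = 1" by (rule unit_if_notin_max)
    have "x = sc b (sc (l - l') x)" using b by simp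
    also have "\<dots> \<in> h l" using i B' subspace_scale by blast
    finally have "x \<in> h l" .
    then show False using x(3) h ll(1) by blast
  qed
  then obtain l where "l \<in> L" "\<forall>B'\<in>F. z l \<notin> B'" by blast
  moreover have "z l \<in> V" unfolding z_def using Vadd[OF y(1) Vsc[OF _ x(1)]] \<open>l \<in> L\<close> L(1) by blast
  ultimately show thesis using that zB by blast
qed

lemma submodule_avoidance:
  assumes M: "module sc"
    and V0: "0 \<in> V" and Vadd: "\<And>x y. x \<in> V \<Longrightarrow> y \<in> V \<Longrightarrow> x + y \<in> V"
    and Vsc: "\<And>a x. a \<in> Rg 0 \<Longrightarrow> x \<in> V \<Longrightarrow> sc a x \<in> V"
    and inf: "infinite (residue_field (Rg 0) m0)"
    and fF: "finite F" and F: "\<And>B. B \<in> F \<Longrightarrow> module.subspace sc B \<and> \<not> V \<subseteq> B"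
  obtains x where "x \<in> V" "\<forall>B\<in>F. x \<notin> B"
proof -
  have "\<exists>x\<in>V. \<forall>B\<in>F. x \<notin> B"
    using fF F
  proof (induction F rule: finite_induct)
    case empty
    then show ?case using V0 by blast
  next
    case (insert B F)
    obtain x where x: "x \<in> V" "\<forall>B'\<in>F. x \<notin> B'" using insert by auto
    obtain y where y: "y \<in> V" "y \<notin> B" using insert.prems by blast
    show ?case
    proof (cases "x \<in> B")
      case True
      obtain z where "z \<in> V" "z \<notin> B" "\<forall>B'\<in>F. z \<notin> B'"
        using avoidance_step[OF M Vadd Vsc inf insert.hyps(1) _ _ x(1) True x(2) y] insert.prems
        by blast
      then show ?thesis by blast
    qed (use x in blast)
  qed
  then show thesis using that by blast
qed

end

section \<open>Minimal homogeneous generators\<close>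

locale min_graded_generators = artinian_local_base Rg m0
  for Rg :: "nat \<Rightarrow> 'r::comm_ring_1 set" and m0 +
  fixes Mg :: "int \<Rightarrow> 'm::ab_group_add set" and sc :: "'r \<Rightarrow> 'm \<Rightarrow> 'm"
    and s :: nat and g :: "nat \<Rightarrow> 'm" and d :: "nat \<Rightarrow> int"
  assumes standard: "standard_graded Rg"
    and graded_module: "graded_module sc Rg Mg"
    and g_hom: "\<forall>i<s. g i \<in> Mg (d i)"
    and g_gen: "module.span sc (g ` {..<s}) = UNIV"
    and d_dec: "\<forall>i j. i \<le> j \<and> j < s \<longrightarrow> d j \<le> d i"
    and g_min: "\<forall>k h e. (\<forall>i<k. h i \<in> Mg (e i)) \<and> module.span sc (h ` {..<k}) = UNIV \<longrightarrow> s \<le> k"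
begin

lemma module: "module sc"
  and dsum_Mg: "internal_dsum Mg"
  and scale_degree: "a \<in> Rg i \<Longrightarrow> x \<in> Mg j \<Longrightarrow> sc a x \<in> Mg (int i + j)"
  using graded_module unfolding graded_module_def by blast+

interpretation module sc by (rule module)

lemma module_at_prime: "prime_ideal p \<Longrightarrow> module_at_prime sc p"
  by (intro module_at_prime.intro module module_at_prime_axioms.intro)

lemma power_degree: "r \<in> Rg 1 \<Longrightarrow> r ^ n \<in> Rg n"
  by (induction n) (simp_all add: R0_one mult_degree[of r 1 _ _, simplified])

lemma congruent_R0_if_R1_in_prime:
  assumes p: "prime_ideal p" and R1: "Rg 1 \<subseteq> p"
  shows "\<exists>r0\<in>Rg 0. r - r0 \<in> p"
proof -
  have I: "is_ideal p" using p by (rule prime_ideal_is_ideal)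
  obtain G where G: "G \<subseteq> Rg 1" "ring_gen (Rg 0 \<union> G) = UNIV"
    using standard unfolding standard_graded_def by blast
  have "r \<in> ring_gen (Rg 0 \<union> G)" using G(2) by simp
  then show ?thesis
  proof induction
    case (gen a)
    show ?case
    proof (cases "a \<in> Rg 0")
      case True
      then show ?thesis using ideal_0[OF I] by (intro bexI[of _ a]) simp_all
    next
      case False
      then have "a \<in> p" using gen G(1) R1 by blast
      then show ?thesis using internal_dsum_0[OF dsum_Rg] by (intro bexI[of _ 0]) simp_all
    qed
  next
    case zero
    show ?case using internal_dsum_0[OF dsum_Rg] ideal_0[OF I] by (intro bexI[of _ 0]) simp_all
  next
    case one
    show ?case using R0_one ideal_0[OF I] by (intro bexI[of _ 1]) simp_all
  next
    case (add a b)
    then obtain a0 b0 where ab: "a0 \<in> Rg 0" "a - a0 \<in> p" "b0 \<in> Rg 0" "b - b0 \<in> p" by blast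
    have "a + b - (a0 + b0) \<in> p" using ideal_add[OF I ab(2,4)] by (simp add: algebra_simps)
    then show ?case using internal_dsum_add[OF dsum_Rg ab(1,3)] by blast
  next
    case (neg a)
    then obtain a0 where a: "a0 \<in> Rg 0" "a - a0 \<in> p" by blast
    have "- a - (- a0) \<in> p" using ideal_uminus[OF I a(2)] by simp
    then show ?case using internal_dsum_uminus[OF dsum_Rg a(1)] by blast
  next
    case (mult a b)
    then obtain a0 b0 where ab: "a0 \<in> Rg 0" "a - a0 \<in> p" "b0 \<in> Rg 0" "b - b0 \<in> p" by blast
    have "a * b - a0 * b0 \<in> p"
      using ideal_add[OF I ideal_mult_left[OF I ab(4)] ideal_mult_left[OF I ab(2)], of a b0]
      by (simp add: algebra_simps)
    then show ?case using R0_mult[OF ab(1,3)] by blast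
  qed
qed

definition combinations :: "'r set \<Rightarrow> 'm set" where
  "combinations I = {\<Sum>i<s. sc (a i) (g i) | a. \<forall>i<s. a i \<in> I}"

lemma subspace_combinations:
  assumes I: "is_ideal I"
  shows "subspace (combinations I)"
proof (rule subspaceI)
  show "0 \<in> combinations I"
    unfolding combinations_def using ideal_0[OF I] by (auto intro!: exI[of _ "\<lambda>_. 0"])
  show "x + y \<in> combinations I" if xy: "x \<in> combinations I" "y \<in> combinations I" for x y
  proof -
    obtain a b where "x = (\<Sum>i<s. sc (a i) (g i))" "y = (\<Sum>i<s. sc (b i) (g i))"
      "\<forall>i<s. a i \<in> I" "\<forall>i<s. b i \<in> I" using xy unfolding combinations_def by blast
    then show ?thesis unfolding combinations_def using ideal_add[OF I]
      by (auto intro!: exI[of _ "\<lambda>i. a i + b i"] simp: sum.distrib scale_left_distrib)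
  qed
  show "sc c x \<in> combinations I" if x: "x \<in> combinations I" for c x
  proof -
    obtain a where "x = (\<Sum>i<s. sc (a i) (g i))" "\<forall>i<s. a i \<in> I"
      using x unfolding combinations_def by blast
    then show ?thesis unfolding combinations_def using ideal_mult_left[OF I]
      by (auto intro!: exI[of _ "\<lambda>i. c * a i"] simp: scale_sum_right)
  qed
qed

lemma combinations_UNIV: "combinations UNIV = UNIV"
proof -
  have "g j \<in> combinations UNIV" if j: "j < s" for j
  proof -
    have "(\<Sum>i<s. sc (if i = j then 1 else 0) (g i)) = (\<Sum>i<s. if i = j then g i else 0)"
      by (rule sum.cong) auto
    also have "\<dots> = g j" using j by simp
    finally show ?thesis unfolding combinations_def
      by (intro CollectI exI[of _ "\<lambda>i. if i = j then 1 else 0"]) simp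
  qed
  then have "span (g ` {..<s}) \<subseteq> combinations UNIV"
    by (intro span_minimal subspace_combinations[OF is_ideal_UNIV]) auto
  then show ?thesis using g_gen by blast
qed

lemma span_ideal_multiples_subset_combinations:
  assumes I: "is_ideal I"
  shows "span (ideal_multiples sc I UNIV) \<subseteq> combinations I"
proof (rule span_minimal[OF _ subspace_combinations[OF I]])
  show "ideal_multiples sc I UNIV \<subseteq> combinations I"
  proof
    fix z assume "z \<in> ideal_multiples sc I UNIV"
    then obtain a m where am: "z = sc a m" "a \<in> I" unfolding ideal_multiples_def by blast
    obtain c where "m = (\<Sum>i<s. sc (c i) (g i))"
      using combinations_UNIV unfolding combinations_def by blast
    then have "z = (\<Sum>i<s. sc (a * c i) (g i))" using am(1) by (simp add: scale_sum_right)
    moreover have "\<forall>i<s. a * c i \<in> I" using ideal_mult_right[OF I am(2)] by blast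
    ultimately show "z \<in> combinations I" unfolding combinations_def
      by (intro CollectI exI[of _ "\<lambda>i. a * c i"]) simp
  qed
qed

lemma hcomp_scale_generator:
  assumes i: "i < s"
  shows "hcomp Mg (d 0) (sc a (g i)) = sc (hcomp Rg (nat (d 0 - d i)) a) (g i)"
proof -
  let ?n = "nat (d 0 - d i)"
  define K where "K = {k. hcomp Rg k a \<noteq> 0}"
  have fK: "finite K" unfolding K_def by (rule hcomp_finite_support[OF dsum_Rg])
  have di: "d i \<le> d 0" using d_dec i by auto
  have "sc a (g i) = sc (\<Sum>k\<in>K. hcomp Rg k a) (g i)"
    using sum_hcomp[OF dsum_Rg, of a] unfolding K_def by simp
  also have "\<dots> = (\<Sum>k\<in>K. sc (hcomp Rg k a) (g i))" by (rule scale_sum_left)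
  finally have "hcomp Mg (d 0) (sc a (g i)) = (\<Sum>k\<in>K. hcomp Mg (d 0) (sc (hcomp Rg k a) (g i)))"
    using hcomp_sum[OF dsum_Mg fK] by simp
  also have "\<dots> = (\<Sum>k\<in>K. if k = ?n then sc (hcomp Rg k a) (g i) else 0)"
  proof (rule sum.cong[OF refl])
    fix k
    have "sc (hcomp Rg k a) (g i) \<in> Mg (int k + d i)"
      using scale_degree[OF hcomp_mem[OF dsum_Rg]] g_hom i by blast
    moreover have "d 0 = int k + d i \<longleftrightarrow> k = ?n" using di by auto
    ultimately show "hcomp Mg (d 0) (sc (hcomp Rg k a) (g i)) = (if k = ?n then sc (hcomp Rg k a) (g i) else 0)"
      using hcomp_homogeneous[OF dsum_Mg] by simp
  qed
  also have "\<dots> = sc (hcomp Rg ?n a) (g i)" using fK unfolding K_def by auto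
  finally show ?thesis .
qed

lemma loc_generates_generators: "prime_ideal p \<Longrightarrow> loc_generates sc p {0} (g ` {..<s})"
  unfolding module_at_prime.loc_generates_0_iff[OF module_at_prime] g_gen
  using prime_ideal_one_notin by auto

lemma generators_nonempty:
  assumes p: "prime_ideal p" and nt: "\<not> loc_trivial sc p"
  shows "0 < s"
proof (rule ccontr)
  assume "\<not> 0 < s"
  then have "span {} = UNIV" using g_gen by simp
  then have "loc_trivial sc p" unfolding loc_trivial_def using prime_ideal_one_notin[OF p] by auto
  then show False using nt by blast
qed

lemma exists_nonvanishing_generator:
  assumes p: "prime_ideal p" and nt: "\<not> loc_trivial sc p"
  obtains j where "j < s" "\<not> fibre_vanishes sc p (g j)"
  using module_at_prime.loc_trivial_if_generators_vanish[OF module_at_prime[OF p] _ g_gen] nt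
  by blast

lemma nonvanishing_in_degree_if_R1_not_in_prime:
  assumes p: "prime_ideal p" and nt: "\<not> loc_trivial sc p" and r: "r \<in> Rg 1" "r \<notin> p"
  shows "\<exists>x\<in>Mg (d 0). \<not> fibre_vanishes sc p x"
proof -
  obtain j where j: "j < s" "\<not> fibre_vanishes sc p (g j)"
    using exists_nonvanishing_generator[OF p nt] .
  define n where "n = nat (d 0 - d j)"
  have "int n + d j = d 0" unfolding n_def using d_dec j(1) by auto
  moreover have "sc (r ^ n) (g j) \<in> Mg (int n + d j)"
    using scale_degree[OF power_degree[OF r(1)]] g_hom j(1) by blast
  ultimately have "sc (r ^ n) (g j) \<in> Mg (d 0)" by simp
  moreover have "\<not> fibre_vanishes sc p (sc (r ^ n) (g j))"
  proof
    assume "fibre_vanishes sc p (sc (r ^ n) (g j))"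
    then obtain u where "u \<notin> p" "sc (u * r ^ n) (g j) \<in> span (ideal_multiples sc p UNIV)"
      unfolding fibre_vanishes_def by auto
    then show False using j(2) prime_ideal_mult_notin[OF p _ prime_ideal_power_notin[OF p r(2)]]
      unfolding fibre_vanishes_def by blast
  qed
  ultimately show ?thesis by blast
qed

lemma first_generator_not_redundant:
  assumes s: "0 < s"
  shows "g 0 \<notin> span (g ` {1..<s})"
proof
  assume g0: "g 0 \<in> span (g ` {1..<s})"
  have "g ` {..<s} \<subseteq> span (g ` {1..<s})"
  proof
    fix x assume "x \<in> g ` {..<s}"
    then obtain i where "i < s" "x = g i" by blast
    then show "x \<in> span (g ` {1..<s})" using g0 by (cases "i = 0") (auto intro: span_base)
  qed
  then have "span (g ` {1..<s}) = UNIV" using span_minimal[OF _ subspace_span] g_gen by blast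
  moreover have "(\<lambda>i. g (Suc i)) ` {..<s - 1} = g ` {1..<s}"
    using s by (simp add: image_comp[of g Suc, symmetric, unfolded comp_def] lessThan_atLeast0)
  ultimately have "s \<le> s - 1"
    using g_min[rule_format, of "s - 1" "\<lambda>i. g (Suc i)" "\<lambda>i. d (Suc i)"] g_hom by simp
  then show False using s by simp
qed

lemma first_generator_notin_prime_multiples:
  assumes p: "prime_ideal p" and hom: "homogeneous_ideal Rg p" and s: "0 < s"
  shows "g 0 \<notin> span (ideal_multiples sc p UNIV)"
proof
  assume "g 0 \<in> span (ideal_multiples sc p UNIV)"
  then obtain a where a: "g 0 = (\<Sum>i<s. sc (a i) (g i))" "\<forall>i<s. a i \<in> p"
    using span_ideal_multiples_subset_combinations[OF prime_ideal_is_ideal[OF p]]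
    unfolding combinations_def by blast
  \<comment> \<open>passing to degree-\<open>d 0\<close> components makes the coefficient \<open>c 0\<close> of \<open>g 0\<close> lie in \<open>R\<^sub>0 \<inter> p \<subseteq> m\<^sub>0\<close>\<close>
  define c where "c i = hcomp Rg (nat (d 0 - d i)) (a i)" for i
  have g0: "g 0 \<in> Mg (d 0)" using g_hom s by blast
  have "g 0 = hcomp Mg (d 0) (g 0)" using hcomp_homogeneous[OF dsum_Mg g0] by simp
  also have "\<dots> = hcomp Mg (d 0) (\<Sum>i<s. sc (a i) (g i))" by (rule arg_cong[OF a(1)])
  also have "\<dots> = (\<Sum>i<s. hcomp Mg (d 0) (sc (a i) (g i)))" by (rule hcomp_sum[OF dsum_Mg]) simp
  also have "\<dots> = (\<Sum>i<s. sc (c i) (g i))"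
    unfolding c_def by (rule sum.cong) (simp_all add: hcomp_scale_generator)
  also have "\<dots> = sc (c 0) (g 0) + (\<Sum>i\<in>{1..<s}. sc (c i) (g i))"
    using s by (simp add: lessThan_atLeast0 sum.atLeast_Suc_lessThan)
  finally have E: "g 0 = sc (c 0) (g 0) + (\<Sum>i\<in>{1..<s}. sc (c i) (g i))" .
  have "g 0 - sc (c 0) (g 0) = (\<Sum>i\<in>{1..<s}. sc (c i) (g i))"
    by (subst diff_eq_eq) (rule trans[OF E add.commute])
  then have "sc (1 - c 0) (g 0) = (\<Sum>i\<in>{1..<s}. sc (c i) (g i))"
    by (simp add: scale_left_diff_distrib)
  also have "\<dots> \<in> span (g ` {1..<s})" by (intro span_sum span_scale span_base) auto
  finally have rest: "sc (1 - c 0) (g 0) \<in> span (g ` {1..<s})" .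
  have "c 0 \<in> p \<inter> Rg 0" unfolding c_def using hom a(2) s hcomp_mem[OF dsum_Rg]
    unfolding homogeneous_ideal_def by simp
  then have "1 - c 0 \<in> Rg 0" "1 - c 0 \<notin> m0"
    using prime_inter_R0_subset_max[OF p] R0_diff[OF R0_one] one_minus_notin_max by auto
  then obtain b where "b * (1 - c 0) = 1" by (rule unit_if_notin_max)
  then have "sc b (sc (1 - c 0) (g 0)) = g 0" by simp
  then show False using first_generator_not_redundant[OF s] span_scale[OF rest, of b] by simp
qed

lemma first_generator_nonvanishing_if_R1_in_prime:
  assumes p: "prime_ideal p" and hom: "homogeneous_ideal Rg p" and R1: "Rg 1 \<subseteq> p" and s: "0 < s"
  shows "\<not> fibre_vanishes sc p (g 0)"
proof
  let ?Q = "span (ideal_multiples sc p UNIV)"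
  assume "fibre_vanishes sc p (g 0)"
  then obtain u where u: "u \<notin> p" "sc u (g 0) \<in> ?Q" unfolding fibre_vanishes_def by blast
  obtain u0 where u0: "u0 \<in> Rg 0" "u - u0 \<in> p" using congruent_R0_if_R1_in_prime[OF p R1] by blast
  have "u0 \<notin> p" using u0(2) u(1) ideal_add[OF prime_ideal_is_ideal[OF p], of "u - u0" u0] by auto
  then have "u0 \<notin> m0" using max_subset_prime[OF p] by blast
  then obtain b where b: "b * u0 = 1" using unit_if_notin_max[OF u0(1)] by blast
  have "sc (u - u0) (g 0) \<in> ?Q" using u0(2) unfolding ideal_multiples_def by (auto intro: span_base)
  then have "sc u (g 0) - sc (u - u0) (g 0) \<in> ?Q" using u(2) by (rule span_diff[rotated])
  then have "sc u0 (g 0) \<in> ?Q" by (simp add: scale_left_diff_distrib)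
  then have "sc b (sc u0 (g 0)) \<in> ?Q" by (rule span_scale)
  then show False using b first_generator_notin_prime_multiples[OF p hom s] by simp
qed

lemma exists_nonvanishing_in_degree:
  assumes p: "prime_ideal p" and hom: "homogeneous_ideal Rg p" and nt: "\<not> loc_trivial sc p"
  shows "\<exists>x\<in>Mg (d 0). \<not> fibre_vanishes sc p x"
proof (cases "Rg 1 \<subseteq> p")
  case True
  then show ?thesis
    using first_generator_nonvanishing_if_R1_in_prime[OF p hom True generators_nonempty[OF p nt]] g_hom
      generators_nonempty[OF p nt] by blast
next
  case False
  then show ?thesis using nonvanishing_in_degree_if_R1_not_in_prime[OF p nt] by blast
qed

lemma exists_common_nonvanishing_in_degree:
  assumes inf: "infinite (residue_field (Rg 0) m0)" and fP: "finite P"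
    and P: "\<And>p. p \<in> P \<Longrightarrow> prime_ideal p \<and> homogeneous_ideal Rg p \<and> \<not> loc_trivial sc p"
  obtains x where "x \<in> Mg (d 0)" "\<forall>p\<in>P. \<not> fibre_vanishes sc p x"
proof -
  let ?F = "(\<lambda>p. {x. fibre_vanishes sc p x}) ` P"
  have F: "subspace B \<and> \<not> Mg (d 0) \<subseteq> B" if B: "B \<in> ?F" for B
  proof -
    obtain p where p: "p \<in> P" and B_eq: "B = {x. fibre_vanishes sc p x}" using B by blast
    have "prime_ideal p" "homogeneous_ideal Rg p" "\<not> loc_trivial sc p" using P[OF p] by auto
    then obtain x where "x \<in> Mg (d 0)" "\<not> fibre_vanishes sc p x"
      using exists_nonvanishing_in_degree by blast
    moreover have "subspace {x. fibre_vanishes sc p x}"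
      using module_at_prime.subspace_fibre_vanishes[OF module_at_prime[OF \<open>prime_ideal p\<close>]] .
    ultimately show ?thesis unfolding B_eq by blast
  qed
  have "sc a x \<in> Mg (d 0)" if "a \<in> Rg 0" "x \<in> Mg (d 0)" for a x
    using scale_degree[OF that] by simp
  then obtain x where "x \<in> Mg (d 0)" "\<forall>B\<in>?F. x \<notin> B"
    using submodule_avoidance[OF module internal_dsum_0[OF dsum_Mg] internal_dsum_add[OF dsum_Mg]
        _ inf finite_imageI[OF fP] F] by blast
  then show thesis using that by auto
qed

end

theorem lemma4p2:
  fixes Rg :: "nat \<Rightarrow> 'r::comm_ring_1 set"
    and Mg :: "int \<Rightarrow> 'm::ab_group_add set"
    and sc :: "'r \<Rightarrow> 'm \<Rightarrow> 'm"
    and m0 :: "'r set"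
    and s :: nat and g :: "nat \<Rightarrow> 'm" and d :: "nat \<Rightarrow> int"
    and P :: "'r set set"
  assumes R_graded: "graded_ring Rg"
    and R_std: "standard_graded Rg"
    and R_noeth: "noetherian_ring TYPE('r)"
    and R0_art: "artinian_subring (Rg 0)"
    and R0_local: "local_with_max (Rg 0) m0"
    and R0_inf: "infinite (residue_field (Rg 0) m0)"
    and M_graded: "graded_module sc Rg Mg"
    and M_fg: "\<exists>F. finite F \<and> module.span sc F = UNIV"
    and g_hom: "\<forall>i<s. g i \<in> Mg (d i)"
    and g_gen: "module.span sc (g ` {..<s}) = UNIV"
    and d_dec: "\<forall>i j. i \<le> j \<and> j < s \<longrightarrow> d j \<le> d i"
    and g_min: "\<forall>k h e. (\<forall>i<k. h i \<in> Mg (e i)) \<and> module.span sc (h ` {..<k}) = UNIV \<longrightarrow> s \<le> k"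
    and P_fin: "finite P"
    and P_hom_prime: "\<forall>p\<in>P. prime_ideal p \<and> homogeneous_ideal Rg p"
  shows "\<exists>x\<in>Mg (d 0). \<forall>p\<in>P.
           int (mu_loc sc {sc r x | r. True} p) = max 0 (int (mu_loc sc {0} p) - 1)"
proof -
  interpret min_graded_generators Rg m0 Mg sc s g d
    by unfold_locales (fact assms)+
  let ?P = "{p \<in> P. mu_loc sc {0} p \<noteq> 0}"
  have "prime_ideal p \<and> homogeneous_ideal Rg p \<and> \<not> loc_trivial sc p" if p: "p \<in> ?P" for p
  proof -
    have "prime_ideal p" "homogeneous_ideal Rg p" using p P_hom_prime by auto
    moreover have "\<not> loc_trivial sc p"
      using p module_at_prime.mu_loc_0_if_loc_trivial[OF module_at_prime[OF \<open>prime_ideal p\<close>]] by auto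
    ultimately show ?thesis by blast
  qed
  moreover have "finite ?P" using P_fin by simp
  ultimately obtain x where x: "x \<in> Mg (d 0)" "\<forall>p\<in>?P. \<not> fibre_vanishes sc p x"
    using exists_common_nonvanishing_in_degree[OF R0_inf] by blast
  have "int (mu_loc sc {sc r x | r. True} p) = max 0 (int (mu_loc sc {0} p) - 1)" if p: "p \<in> P" for p
  proof -
    have "prime_ideal p" using p P_hom_prime by blast
    moreover have "mu_loc sc {0} p = 0 \<or> \<not> fibre_vanishes sc p x" using p x(2) by blast
    ultimately show ?thesis
      using module_at_prime.mu_loc_quotient_cyclic[OF module_at_prime _ loc_generates_generators] by blast
  qed
  then show ?thesis using x(1) by blast
qed

end
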